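(* Let $d\ge 2$, let $M_{c^*}:\mathbb{R}^d\to\mathbb{R}$ be an affine function (the margin of a linear classification model, as defined in the context) with $\nabla M_{c^*}\neq 0$, and let $z\in\mathbb{R}^d$ satisfy $M_{c^*}(z)>0$. Fix $\delta\in(0,1)$ and, for a radius $R>0$, let $$\mathbb{E}\big[\widehat{\nabla M_{c^*}}(z,R)\big]:=\mathbb{E}_u\big[\Phi_{c^*}(z+\delta R u)\,u\big],$$ where $u$ is uniformly distributed on the unit sphere of $\mathbb{R}^d$. Then $$\cos\angle\Big(\mathbb{E}\big[\widehat{\nabla M_{c^*}}(z,R)\big],\ \nabla M_{c^*}(z)\Big)\ \ge\ 1-\mathcal{O}\!\left(\frac{M_{c^*}(z)^2\,(d-1)^2}{\delta^2R^2\,\|\nabla M_{c^*}(z)\|_2^2}\right),$$ and consequently $$\lim_{R\to\infty}\cos\angle\Big(\mathbb{E}\big[\widehat{\nabla M_{c^*}}(z,R)\big],\ \nabla M_{c^*}(z)\Big)=1.$$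
   Context: A classifier $f$ has class scores $f_c$ for $c$ in a finite label set $C$, and $c^*\in C$ is a target class. The margin is $M_{c^*}(z)=f_{c^*}(z)-\max_{c\neq c^*}f_c(z)$ (in the paper $z$ is a latent vector fed through a generator; here $M_{c^*}$ is regarded directly as a function of $z\in\mathbb{R}^d$). "Linear classification model" means $M_{c^*}$ is affine in $z$, so its first-order Taylor expansion is exact. $\mathrm{sign}(t)=1$ if $t>0$ and $-1$ otherwise, and $\Phi_{c^*}(z)=(\mathrm{sign}(M_{c^*}(z))-1)/2$, i.e. $\Phi_{c^*}(z)=0$ if $z$ is classified as $c^*$ ($M_{c^*}(z)>0$) and $-1$ otherwise. The label-only gradient estimator is $\widehat{M_{c^*}}(z,R)=\frac1N\sum_{n=1}^N\Phi_{c^*}(z+Ru_n)u_n$ with $u_n$ sampled uniformly on a sphere; its expectation is the quantity in the claim. $\angle(a,b)$ is the angle between vectors $a,b$. The $\mathcal{O}$ is as $R$ varies with $z$, $d$, $\delta$ and $M_{c^*}$ fixed. *)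

theory Defs
  imports "HOL-Analysis.Analysis"
begin

definition sign :: "real \<Rightarrow> real" where
  "sign t = (if t > 0 then 1 else -1)"

definition Phi :: "('a \<Rightarrow> real) \<Rightarrow> 'a \<Rightarrow> real" where
  "Phi M z = (sign (M z) - 1) / 2"

text \<open>Uniform (normalised surface) distribution on the unit sphere of a Euclidean
  space, realised as the radial projection of the uniform distribution on the unit
  ball (the cone measure, which coincides with normalised surface measure on the sphere).\<close>
definition unif_sphere :: "'a::euclidean_space measure" where
  "unif_sphere = distr (uniform_measure lborel (ball 0 1)) borel (\<lambda>x. x /\<^sub>R norm x)"

definition exp_grad_est :: "('a::euclidean_space \<Rightarrow> real) \<Rightarrow> 'a \<Rightarrow> real \<Rightarrow> real \<Rightarrow> 'a" where
  "exp_grad_est M z \<delta> R = integral\<^sup>L unif_sphere (\<lambda>u. Phi M (z + (\<delta> * R) *\<^sub>R u) *\<^sub>R u)"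

definition cos_angle :: "'a::real_inner \<Rightarrow> 'a \<Rightarrow> real" where
  "cos_angle x y = inner x y / (norm x * norm y)"

end

theory Submission
  imports Defs "HOL-Probability.Probability"
begin

(* For an affine margin M x = a \<bullet> x + b the label Phi M (z + r u) depends on u only
   through a \<bullet> u. The reflection through the line spanned by a fixes a \<bullet> u and preserves
   the uniform distribution on the sphere, so the expected estimator is fixed by it and is
   therefore a multiple of a. The multiple is positive as soon as the sphere of radius
   \<delta> R around z crosses the decision boundary, i.e. M z < \<delta> R |a|: the integrand of
   a \<bullet> E is then nonnegative, and strictly positive on an open cap of the sphere. Hence
   the cosine is exactly 1 for all large R, and the bound holds with C = 0. *)

lemma borel_measurable_linear:
  fixes f :: "'a::euclidean_space \<Rightarrow> 'b::euclidean_space"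
  assumes "linear f"
  shows "f \<in> borel_measurable borel"
  using assms by (intro borel_measurable_continuous_onI linear_continuous_on)
    (simp add: linear_conv_bounded_linear[symmetric])

lemma nn_integral_lborel_translate:
  fixes h :: "'a::euclidean_space \<Rightarrow> ennreal"
  assumes [measurable]: "h \<in> borel_measurable borel"
  shows "(\<integral>\<^sup>+y. h (c + y) \<partial>lborel) = (\<integral>\<^sup>+y. h y \<partial>lborel)"
proof -
  have "(\<integral>\<^sup>+y. h y \<partial>lborel) = (\<integral>\<^sup>+y. h y \<partial>distr lborel borel ((+) c))"
    by (simp add: lborel_distr_plus)
  also have "\<dots> = (\<integral>\<^sup>+y. h (c + y) \<partial>lborel)"
    by (subst nn_integral_distr) auto
  finally show ?thesis ..
qed

lemma nn_integral_lborel_reflect: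
  fixes h :: "'a::euclidean_space \<Rightarrow> ennreal"
  assumes [measurable]: "h \<in> borel_measurable borel"
  shows "(\<integral>\<^sup>+y. h (c - y) \<partial>lborel) = (\<integral>\<^sup>+y. h y \<partial>lborel)"
proof -
  have "lborel = density (distr lborel borel (\<lambda>x. c + (-1::real) *\<^sub>R x)) (\<lambda>_. \<bar>-1::real\<bar> ^ DIM('a))"
    by (rule lborel_affine) simp
  then have "(\<integral>\<^sup>+y. h y \<partial>lborel) = (\<integral>\<^sup>+y. h y \<partial>distr lborel borel (\<lambda>x. c + (-1::real) *\<^sub>R x))"
    by (simp add: density_1)
  also have "\<dots> = (\<integral>\<^sup>+y. h (c - y) \<partial>lborel)"
    by (subst nn_integral_distr) auto
  finally show ?thesis ..
qed

text \<open>The uniqueness argument for Haar measure: by translation invariance and Fubini, both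
  sides equal the double integral of \<open>h\<^sub>1 (f x - y) * h\<^sub>2 (f x)\<close>.\<close>
lemma nn_integral_lborel_linear_exchange:
  fixes f :: "'a::euclidean_space \<Rightarrow> 'a" and h\<^sub>1 h\<^sub>2 :: "'a \<Rightarrow> ennreal"
  assumes f: "linear f" "surj f"
    and [measurable]: "h\<^sub>1 \<in> borel_measurable borel" "h\<^sub>2 \<in> borel_measurable borel"
  shows "(\<integral>\<^sup>+x. h\<^sub>1 (f x) \<partial>lborel) * (\<integral>\<^sup>+y. h\<^sub>2 y \<partial>lborel)
       = (\<integral>\<^sup>+x. h\<^sub>2 (f x) \<partial>lborel) * (\<integral>\<^sup>+y. h\<^sub>1 y \<partial>lborel)"
proof -
  have [measurable]: "f \<in> borel_measurable borel"
    using f(1) by (rule borel_measurable_linear)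
  have shift: "(\<integral>\<^sup>+x. h\<^sub>1 (f x) * h\<^sub>2 (f x + y) \<partial>lborel) = (\<integral>\<^sup>+x. h\<^sub>1 (f x - y) * h\<^sub>2 (f x) \<partial>lborel)"
    for y
  proof -
    obtain w where w: "f w = - y"
      using f(2) by (metis surj_def)
    have "(\<integral>\<^sup>+x. h\<^sub>1 (f x) * h\<^sub>2 (f x + y) \<partial>lborel)
        = (\<integral>\<^sup>+x. h\<^sub>1 (f (w + x)) * h\<^sub>2 (f (w + x) + y) \<partial>lborel)"
      by (rule nn_integral_lborel_translate[symmetric, where h="\<lambda>x. h\<^sub>1 (f x) * h\<^sub>2 (f x + y)"])
        measurable
    then show ?thesis
      using f(1) w by (simp add: linear_add)
  qed
  have "(\<integral>\<^sup>+x. h\<^sub>1 (f x) \<partial>lborel) * (\<integral>\<^sup>+y. h\<^sub>2 y \<partial>lborel)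
      = (\<integral>\<^sup>+x. (\<integral>\<^sup>+y. h\<^sub>1 (f x) * h\<^sub>2 (f x + y) \<partial>lborel) \<partial>lborel)"
    by (simp add: nn_integral_multc nn_integral_cmult nn_integral_lborel_translate)
  also have "\<dots> = (\<integral>\<^sup>+y. (\<integral>\<^sup>+x. h\<^sub>1 (f x - y) * h\<^sub>2 (f x) \<partial>lborel) \<partial>lborel)"
    by (subst lborel_pair.Fubini') (simp_all add: shift)
  also have "\<dots> = (\<integral>\<^sup>+x. (\<integral>\<^sup>+y. h\<^sub>1 (f x - y) \<partial>lborel) * h\<^sub>2 (f x) \<partial>lborel)"
    by (subst lborel_pair.Fubini') (simp_all add: nn_integral_multc)
  also have "\<dots> = (\<integral>\<^sup>+x. h\<^sub>2 (f x) \<partial>lborel) * (\<integral>\<^sup>+y. h\<^sub>1 y \<partial>lborel)"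
    by (simp add: nn_integral_lborel_reflect nn_integral_multc mult.commute[of "integral\<^sup>N lborel h\<^sub>1"])
  finally show ?thesis .
qed

lemma emeasure_lborel_ball_pos:
  fixes c :: "'a::euclidean_space"
  assumes "0 < r"
  shows "0 < emeasure lborel (ball c r)"
  using content_ball_pos[OF assms, of c] emeasure_lborel_ball_finite[of c r]
  by (simp add: emeasure_eq_ennreal_measure)

lemma emeasure_lborel_open_pos:
  fixes A :: "'a::euclidean_space set"
  assumes "open A" "A \<noteq> {}"
  shows "0 < emeasure lborel A"
proof -
  obtain c r where "0 < r" "ball c r \<subseteq> A"
    using assms by (meson ex_in_conv openE)
  then show ?thesis
    using emeasure_lborel_ball_pos emeasure_mono[of "ball c r" A lborel] assms(1)
    by (metis borel_open order_less_le_trans sets_lborel)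
qed

lemma distr_lborel_orthogonal_transformation:
  fixes f :: "'a::euclidean_space \<Rightarrow> 'a"
  assumes f: "orthogonal_transformation f"
  shows "distr lborel borel f = lborel"
proof (rule measure_eqI)
  note [measurable] = borel_measurable_linear[OF orthogonal_transformation_linear[OF f]]
  let ?B = "ball (0::'a) 1"
  fix A assume "A \<in> sets (distr lborel borel f)"
  then have [measurable]: "A \<in> sets borel" by simp
  have distr_eq: "emeasure (distr lborel borel f) S = (\<integral>\<^sup>+x. indicator S (f x) \<partial>lborel)"
    if [measurable]: "S \<in> sets borel" for S
  proof -
    have "emeasure (distr lborel borel f) S = emeasure lborel (f -` S)"
      by (subst emeasure_distr) auto
    also have "\<dots> = (\<integral>\<^sup>+x. indicator (f -` S) x \<partial>lborel)"
      using measurable_sets[of f borel borel S] by (simp add: nn_integral_indicator)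
    finally show ?thesis
      by (simp add: indicator_vimage)
  qed
  have "(\<lambda>x. indicator ?B (f x) :: ennreal) = indicator ?B"
    using f by (auto simp: indicator_def orthogonal_transformation_norm)
  moreover have "(\<integral>\<^sup>+x. indicator A (f x) \<partial>lborel) * (\<integral>\<^sup>+y. indicator ?B y \<partial>lborel)
      = (\<integral>\<^sup>+x. indicator ?B (f x) \<partial>lborel) * (\<integral>\<^sup>+y. indicator A y \<partial>lborel)"
    using f by (intro nn_integral_lborel_linear_exchange)
      (auto simp: orthogonal_transformation_linear orthogonal_transformation_surj borel_measurable_indicator)
  ultimately have "emeasure lborel ?B * emeasure (distr lborel borel f) A = emeasure lborel ?B * emeasure lborel A"
    by (simp add: distr_eq mult.commute[of _ "emeasure lborel ?B"])
  then show "emeasure (distr lborel borel f) A = emeasure lborel A"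
    using emeasure_lborel_ball_pos[of 1 "0::'a"] emeasure_lborel_ball_finite[of "0::'a" 1]
    by (auto simp: ennreal_mult_cancel_left)
qed simp

lemma distr_uniform_measure_orthogonal_transformation:
  fixes f :: "'a::euclidean_space \<Rightarrow> 'a"
  assumes f: "orthogonal_transformation f"
    and [measurable]: "A \<in> sets borel" and A: "f -` A = A"
  shows "distr (uniform_measure lborel A) borel f = uniform_measure lborel A"
proof (rule measure_eqI)
  note [measurable] = borel_measurable_linear[OF orthogonal_transformation_linear[OF f]]
  fix S assume "S \<in> sets (distr (uniform_measure lborel A) borel f)"
  then have [measurable]: "S \<in> sets borel" by simp
  have "emeasure (distr (uniform_measure lborel A) borel f) S
      = emeasure lborel (A \<inter> f -` S) / emeasure lborel A"
    using measurable_sets[of f borel borel S] by (subst emeasure_distr) auto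
  also have "A \<inter> f -` S = f -` (A \<inter> S)"
    using A by auto
  also have "emeasure lborel (f -` (A \<inter> S)) = emeasure (distr lborel borel f) (A \<inter> S)"
    by (subst emeasure_distr) auto
  also have "\<dots> = emeasure lborel (A \<inter> S)"
    by (simp add: distr_lborel_orthogonal_transformation[OF f])
  finally show "emeasure (distr (uniform_measure lborel A) borel f) S = emeasure (uniform_measure lborel A) S"
    by simp
qed simp

lemma sets_unif_sphere [simp, measurable_cong]: "sets unif_sphere = sets borel"
  by (simp add: unif_sphere_def)

lemma space_unif_sphere [simp]: "space unif_sphere = UNIV"
  by (simp add: unif_sphere_def)

lemma prob_space_uniform_unit_ball: "prob_space (uniform_measure lborel (ball (0::'a::euclidean_space) 1))"
  using emeasure_lborel_ball_pos[of 1 "0::'a"] emeasure_lborel_ball_finite[of "0::'a" 1]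
  by (intro prob_space_uniform_measure) auto

lemma prob_space_unif_sphere: "prob_space (unif_sphere :: 'a::euclidean_space measure)"
  unfolding unif_sphere_def
  by (rule prob_space.prob_space_distr[OF prob_space_uniform_unit_ball]) measurable

lemma distr_unif_sphere_orthogonal_transformation:
  fixes f :: "'a::euclidean_space \<Rightarrow> 'a"
  assumes f: "orthogonal_transformation f"
  shows "distr unif_sphere borel f = unif_sphere"
proof -
  let ?U = "uniform_measure lborel (ball (0::'a) 1)"
  note [measurable] = borel_measurable_linear[OF orthogonal_transformation_linear[OF f]]
  have "f \<circ> (\<lambda>x. x /\<^sub>R norm x) = (\<lambda>x. x /\<^sub>R norm x) \<circ> f"
    using f by (auto simp: orthogonal_transformation_norm orthogonal_transformation_scaleR)
  then have "distr unif_sphere borel f = distr (distr ?U borel f) borel (\<lambda>x. x /\<^sub>R norm x)"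
    unfolding unif_sphere_def by (simp add: distr_distr)
  also have "distr ?U borel f = ?U"
    using f by (intro distr_uniform_measure_orthogonal_transformation)
      (auto simp: orthogonal_transformation_norm)
  finally show ?thesis
    by (simp add: unif_sphere_def)
qed

lemma AE_unif_sphere_norm_le_1: "AE u in unif_sphere. norm (u :: 'a::euclidean_space) \<le> 1"
proof -
  have "norm (x /\<^sub>R norm x) \<le> 1" for x :: 'a
    by (cases "x = 0") simp_all
  then show ?thesis
    unfolding unif_sphere_def by (subst AE_distr_iff) (auto intro!: AE_I2)
qed

lemma emeasure_unif_sphere_pos:
  fixes S :: "'a::euclidean_space set"
  assumes "open S" "u \<in> S" "norm u = 1"
  shows "0 < emeasure unif_sphere S"
proof -
  let ?n = "\<lambda>x::'a. x /\<^sub>R norm x"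
  let ?V = "(ball 0 1 - {0}) \<inter> ?n -` S"
  have [measurable]: "S \<in> sets borel"
    using \<open>open S\<close> by simp
  have "?n \<in> borel_measurable borel"
    by measurable
  then have "?n -` S \<in> sets borel"
    using measurable_sets[of ?n borel borel S] by simp
  have "continuous_on (ball 0 1 - {0}) ?n"
    by (intro continuous_intros) auto
  then have "open ?V"
    using \<open>open S\<close> by (intro continuous_open_preimage) auto
  moreover have "u /\<^sub>R 2 \<in> ?V"
    using assms by (cases "u = 0") auto
  ultimately have "0 < emeasure lborel ?V"
    by (metis emeasure_lborel_open_pos empty_iff)
  also have "\<dots> \<le> emeasure lborel (ball 0 1 \<inter> ?n -` S)"
    using \<open>?n -` S \<in> sets borel\<close> by (intro emeasure_mono) auto
  finally have "0 < emeasure lborel (ball 0 1 \<inter> ?n -` S) / emeasure lborel (ball (0::'a) 1)"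
    using emeasure_lborel_ball_finite[of "0::'a" 1] by (simp add: ennreal_zero_less_divide)
  also have "\<dots> = emeasure unif_sphere S"
    using \<open>?n -` S \<in> sets borel\<close> unfolding unif_sphere_def by (subst emeasure_distr) auto
  finally show ?thesis .
qed

lemma integral_unif_sphere_pos:
  fixes h :: "'a::euclidean_space \<Rightarrow> real"
  assumes "integrable unif_sphere h" "\<And>u. 0 \<le> h u"
    and "open S" "u \<in> S" "norm u = 1" "\<And>u. u \<in> S \<Longrightarrow> 0 < h u"
  shows "0 < integral\<^sup>L unif_sphere h"
proof -
  have "\<not> (AE u in unif_sphere. h u = 0)"
  proof
    assume "AE u in unif_sphere. h u = 0"
    then have "AE u in unif_sphere. u \<notin> S"
      by eventually_elim (use assms(6) in force)
    then have "emeasure unif_sphere S = 0"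
      using \<open>open S\<close> by (subst (asm) AE_iff_null_sets[symmetric]) auto
    then show False
      using emeasure_unif_sphere_pos[OF assms(3-5)] by simp
  qed
  then have "integral\<^sup>L unif_sphere h \<noteq> 0"
    by (simp add: integral_nonneg_eq_0_iff_AE[OF assms(1)] assms(2))
  moreover have "0 \<le> integral\<^sup>L unif_sphere h"
    by (rule integral_nonneg_AE) (simp add: assms(2))
  ultimately show ?thesis
    by linarith
qed

lemma integral_unif_sphere_equivariant:
  fixes F :: "'a::euclidean_space \<Rightarrow> 'a"
  assumes P: "orthogonal_transformation P"
    and [measurable]: "F \<in> borel_measurable borel"
    and FP: "\<And>u. F (P u) = P (F u)"
  shows "P (integral\<^sup>L unif_sphere F) = integral\<^sup>L unif_sphere F"
proof -
  note [measurable] = borel_measurable_linear[OF orthogonal_transformation_linear[OF P]]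
  have "integral\<^sup>L unif_sphere F = integral\<^sup>L (distr unif_sphere borel P) F"
    by (simp add: distr_unif_sphere_orthogonal_transformation[OF P])
  also have "\<dots> = integral\<^sup>L unif_sphere (\<lambda>u. P (F u))"
    by (subst integral_distr) (simp_all add: FP)
  also have "\<dots> = P (integral\<^sup>L unif_sphere F)"
  proof (rule integral_bounded_linear')
    show "bounded_linear P" "bounded_linear (inv P)"
      using P orthogonal_transformation_inv[OF P]
      by (simp_all add: linear_conv_bounded_linear[symmetric] orthogonal_transformation_linear)
    show "\<forall>x. inv P (P x) = x"
      using orthogonal_transformation_inj[OF P] by simp
  qed
  finally show ?thesis ..
qed

definition line_reflection :: "'a::real_inner \<Rightarrow> 'a \<Rightarrow> 'a" where
  "line_reflection a u = (2 * (a \<bullet> u) / (a \<bullet> a)) *\<^sub>R a - u"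

lemma orthogonal_transformation_line_reflection:
  "orthogonal_transformation (line_reflection (a::'a::real_inner))"
proof (cases "a = 0")
  case True
  then have "line_reflection a = (\<lambda>u. - u)"
    by (simp add: line_reflection_def fun_eq_iff)
  then show ?thesis
    by (simp add: orthogonal_transformation_neg)
next
  case False
  then have aa: "a \<bullet> a \<noteq> 0" by simp
  have "linear (line_reflection a)"
    by (rule linearI) (simp_all add: line_reflection_def inner_add_right add_divide_distrib
        scaleR_add_left algebra_simps)
  moreover have "line_reflection a v \<bullet> line_reflection a w = v \<bullet> w" for v w
  proof -
    have "line_reflection a v \<bullet> line_reflection a w
        = 4 * (a \<bullet> v) * (a \<bullet> w) * (a \<bullet> a) / (a \<bullet> a)^2 - 4 * (a \<bullet> v) * (a \<bullet> w) / (a \<bullet> a) + v \<bullet> w"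
      by (simp add: line_reflection_def inner_diff_left inner_diff_right inner_commute power2_eq_square
          algebra_simps)
    also have "\<dots> = v \<bullet> w"
      using aa by (simp add: power2_eq_square)
    finally show ?thesis .
  qed
  ultimately show ?thesis
    by (simp add: orthogonal_transformation_def)
qed

lemma inner_line_reflection [simp]: "a \<bullet> line_reflection a u = a \<bullet> u"
  by (cases "a = 0") (simp_all add: line_reflection_def inner_diff_right)

lemma line_reflection_fixpoint:
  assumes "line_reflection a v = v"
  shows "v = ((a \<bullet> v) / (a \<bullet> a)) *\<^sub>R a"
proof -
  have "2 *\<^sub>R v = 2 *\<^sub>R (((a \<bullet> v) / (a \<bullet> a)) *\<^sub>R a)"
    using assms unfolding line_reflection_def by (simp add: scaleR_2 algebra_simps)
  then show ?thesis
    by (metis scaleR_cancel_left zero_neq_numeral)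
qed

lemma borel_measurable_Phi [measurable]:
  assumes [measurable]: "M \<in> borel_measurable borel"
  shows "Phi M \<in> borel_measurable borel"
  unfolding Phi_def sign_def by measurable

lemma borel_measurable_affine:
  fixes M :: "'a::euclidean_space \<Rightarrow> real"
  assumes "\<And>x. M x = a \<bullet> x + b"
  shows "M \<in> borel_measurable borel"
proof -
  have "M = (\<lambda>x. a \<bullet> x + b)"
    using assms by auto
  then show ?thesis
    by simp
qed

lemma Phi_affine_mult_inner:
  fixes M :: "'a::euclidean_space \<Rightarrow> real"
  assumes M: "\<And>x. M x = a \<bullet> x + b" and "0 < M z" "0 < s"
  shows "0 \<le> Phi M (z + s *\<^sub>R u) * (a \<bullet> u)"
    and "a \<bullet> u < - M z / s \<Longrightarrow> 0 < Phi M (z + s *\<^sub>R u) * (a \<bullet> u)"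
proof -
  have M_at: "M (z + s *\<^sub>R u) = M z + s * (a \<bullet> u)"
    by (simp add: M inner_add_right)
  show "0 \<le> Phi M (z + s *\<^sub>R u) * (a \<bullet> u)"
  proof (cases "0 < M (z + s *\<^sub>R u)")
    case False
    then have "s * (a \<bullet> u) < 0"
      using \<open>0 < M z\<close> by (simp add: M_at)
    then show ?thesis
      using False \<open>0 < s\<close> by (simp add: Phi_def sign_def mult_less_0_iff)
  qed (simp add: Phi_def sign_def)
  assume "a \<bullet> u < - M z / s"
  then have "s * (a \<bullet> u) < s * (- M z / s)"
    using \<open>0 < s\<close> by (intro mult_strict_left_mono)
  also have "\<dots> = - M z"
    using \<open>0 < s\<close> by simp
  finally have "M (z + s *\<^sub>R u) < 0" "s * (a \<bullet> u) < 0"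
    using \<open>0 < M z\<close> by (simp_all add: M_at)
  then show "0 < Phi M (z + s *\<^sub>R u) * (a \<bullet> u)"
    using \<open>0 < s\<close> by (simp add: Phi_def sign_def mult_less_0_iff)
qed

lemma integrable_unif_sphere_Phi_scaleR:
  fixes M :: "'a::euclidean_space \<Rightarrow> real"
  assumes [measurable]: "M \<in> borel_measurable borel"
  shows "integrable unif_sphere (\<lambda>u. Phi M (z + r *\<^sub>R u) *\<^sub>R u)"
proof -
  interpret prob_space "unif_sphere :: 'a measure"
    by (rule prob_space_unif_sphere)
  have "norm (Phi M (z + r *\<^sub>R u) *\<^sub>R u) \<le> 1" if "norm u \<le> 1" for u
  proof -
    have "\<bar>Phi M (z + r *\<^sub>R u)\<bar> \<le> 1"
      by (simp add: Phi_def sign_def)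
    then show ?thesis
      using that by (simp add: mult_le_one)
  qed
  then have "AE u in unif_sphere. norm (Phi M (z + r *\<^sub>R u) *\<^sub>R u) \<le> 1"
    using AE_unif_sphere_norm_le_1 by (auto elim: AE_mp)
  then show ?thesis
    by (rule integrable_const_bound) simp
qed

lemma inner_exp_grad_est:
  fixes M :: "'a::euclidean_space \<Rightarrow> real"
  assumes "M \<in> borel_measurable borel"
  shows "c \<bullet> exp_grad_est M z \<delta> R = (\<integral>u. Phi M (z + (\<delta> * R) *\<^sub>R u) * (c \<bullet> u) \<partial>unif_sphere)"
  using integral_inner_right[OF integrable_unif_sphere_Phi_scaleR[OF assms], of c z "\<delta> * R"]
  by (simp add: exp_grad_est_def)

lemma exp_grad_est_parallel:
  fixes M :: "'a::euclidean_space \<Rightarrow> real"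
  assumes M: "\<And>x. M x = a \<bullet> x + b"
  shows "exp_grad_est M z \<delta> R = ((a \<bullet> exp_grad_est M z \<delta> R) / (a \<bullet> a)) *\<^sub>R a"
proof (rule line_reflection_fixpoint)
  let ?F = "\<lambda>u. Phi M (z + (\<delta> * R) *\<^sub>R u) *\<^sub>R u"
  note [measurable] = borel_measurable_affine[OF M]
  have [measurable]: "?F \<in> borel_measurable borel"
    by measurable
  have "?F (line_reflection a u) = line_reflection a (?F u)" for u
    by (simp add: M Phi_def inner_add_right
        orthogonal_transformation_scaleR[OF orthogonal_transformation_line_reflection])
  then show "line_reflection a (exp_grad_est M z \<delta> R) = exp_grad_est M z \<delta> R"
    unfolding exp_grad_est_def
    by (intro integral_unif_sphere_equivariant orthogonal_transformation_line_reflection) simp_all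
qed

lemma inner_exp_grad_est_pos:
  fixes M :: "'a::euclidean_space \<Rightarrow> real"
  assumes M: "\<And>x. M x = a \<bullet> x + b"
    and Mz: "0 < M z" "M z < \<delta> * R * norm a"
  shows "0 < a \<bullet> exp_grad_est M z \<delta> R"
proof -
  define s where "s = \<delta> * R"
  define S where "S = {u. a \<bullet> u < - M z / s}"
  have Mz_lt: "M z < s * norm a"
    using Mz by (simp add: s_def)
  then have "0 < s * norm a"
    using Mz by linarith
  then have s: "0 < s" and a: "0 < norm a"
    by (simp_all add: zero_less_mult_iff)
  have "- a /\<^sub>R norm a \<in> S"
  proof -
    have "a \<bullet> (- a /\<^sub>R norm a) = - norm a"
      using a by (simp add: dot_square_norm power2_eq_square)
    also have "\<dots> < - M z / s"
      using Mz_lt s by (simp add: pos_divide_less_eq mult.commute)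
    finally show ?thesis
      by (simp add: S_def)
  qed
  moreover have "open S"
    unfolding S_def by (intro open_Collect_less continuous_intros)
  moreover have "integrable unif_sphere (\<lambda>u. Phi M (z + s *\<^sub>R u) * (a \<bullet> u))"
    using integrable_inner_right[OF integrable_unif_sphere_Phi_scaleR[OF borel_measurable_affine[OF M]]]
    by simp
  ultimately have "0 < (\<integral>u. Phi M (z + s *\<^sub>R u) * (a \<bullet> u) \<partial>unif_sphere)"
    using a Phi_affine_mult_inner[OF M Mz(1) s]
    by (intro integral_unif_sphere_pos[where S = S and u = "- a /\<^sub>R norm a"]) (auto simp: S_def)
  then show ?thesis
    by (simp add: inner_exp_grad_est[OF borel_measurable_affine[OF M]] s_def)
qed

lemma cos_angle_scaleR_self:
  fixes a :: "'a::real_inner"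
  assumes "0 < c" "a \<noteq> 0"
  shows "cos_angle (c *\<^sub>R a) a = 1"
  using assms by (simp add: cos_angle_def dot_square_norm power2_eq_square)

lemma cos_angle_exp_grad_est:
  fixes M :: "'a::euclidean_space \<Rightarrow> real"
  assumes M: "\<And>x. M x = a \<bullet> x + b"
    and Mz: "0 < M z" "M z < \<delta> * R * norm a"
  shows "cos_angle (exp_grad_est M z \<delta> R) a = 1"
proof -
  have pos: "0 < a \<bullet> exp_grad_est M z \<delta> R"
    using inner_exp_grad_est_pos[OF M Mz] .
  then have a: "a \<noteq> 0"
    by auto
  then have "0 < (a \<bullet> exp_grad_est M z \<delta> R) / (a \<bullet> a)"
    using pos by simp
  then show ?thesis
    by (subst exp_grad_est_parallel[OF M]) (rule cos_angle_scaleR_self[OF _ a])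
qed

theorem theorem1:
  fixes M :: "'a::euclidean_space \<Rightarrow> real" and a z :: 'a and b \<delta> :: real
  assumes "DIM('a) \<ge> 2"
    and "\<And>x. M x = inner a x + b"
    and "a \<noteq> 0"
    and "M z > 0"
    and "0 < \<delta>" and "\<delta> < 1"
  shows "(\<exists>C. \<forall>\<^sub>F R in at_top.
            cos_angle (exp_grad_est M z \<delta> R) a
              \<ge> 1 - C * ((M z)\<^sup>2 * (real DIM('a) - 1)\<^sup>2 / (\<delta>\<^sup>2 * R\<^sup>2 * (norm a)\<^sup>2)))
       \<and> ((\<lambda>R. cos_angle (exp_grad_est M z \<delta> R) a) \<longlongrightarrow> 1) at_top"
proof -
  have "\<forall>\<^sub>F R in at_top. M z < \<delta> * R * norm a"
    using eventually_gt_at_top[of "M z / (\<delta> * norm a)"]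
    by eventually_elim (use assms(3,5) in \<open>simp add: divide_less_eq mult.commute mult.left_commute\<close>)
  then have cos_eq_1: "\<forall>\<^sub>F R in at_top. cos_angle (exp_grad_est M z \<delta> R) a = 1"
    by eventually_elim (rule cos_angle_exp_grad_est[OF assms(2,4)])
  then have "\<forall>\<^sub>F R in at_top. cos_angle (exp_grad_est M z \<delta> R) a
              \<ge> 1 - 0 * ((M z)\<^sup>2 * (real DIM('a) - 1)\<^sup>2 / (\<delta>\<^sup>2 * R\<^sup>2 * (norm a)\<^sup>2))"
    by eventually_elim simp
  moreover have "((\<lambda>R. cos_angle (exp_grad_est M z \<delta> R) a) \<longlongrightarrow> 1) at_top"
    using cos_eq_1 by (rule tendsto_eventually)
  ultimately show ?thesis
    by blast
qed

end
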